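(* Let $\mathcal{M}=(E,\mathcal{C}^* )$ be a uniform oriented matroid of rank $r\ge 2$ and let $T$ be a tope of $\mathcal{M}$. Let $\mathcal{C}_T=\{X\in\mathcal{C}^*: X< T\}$ and $\mathcal{A}=\{X^0: X\in\mathcal{C}_T\}$. Then $\mathcal{A}$ is a $d$-dimensional abstract polytope on the ground set $E$, where $d=r-1$. Moreover, the graph $G(T)$ of $T$ is isomorphic to the graph $G_{abs}(\mathcal{A})$ of $\mathcal{A}$ (via $X\mapsto X^0$).
   Context: Sign vectors: for a finite set $E$ and $X\in\{+,-,0\}^E$, write $X^+=\{e:X_e=+\}$, $X^-=\{e:X_e=-\}$, $X^0=\{e:X_e=0\}$, $\operatorname{supp}(X)=X^+\cup X^-$, and $-X$ for the componentwise negation. For sign vectors $X,Y$, the separating set is $S(X,Y)=(X^+\cap Y^-)\cup(X^-\cap Y^+)$, and the composition $X\circ Y$ is given by $(X\circ Y)_e=X_e$ if $X_e\neq 0$ and $(X\circ Y)_e=Y_e$ otherwise. An oriented matroid $\mathcal{M}=(E,\mathcal{C}^* )$ is a finite set $E$ together with a set $\mathcal{C}^*\subseteq\{+,-,0\}^E$ of (signed) cocircuits satisfying: (CC0) $\mathbf{0}\notin\mathcal{C}^*$; (CC1) $X\in\mathcal{C}^*\Rightarrow -X\in\mathcal{C}^*$; (CC2) if $X,Y\in\mathcal{C}^*$ and $\operatorname{supp}(X)\subseteq\operatorname{supp}(Y)$ then $X=\pm Y$; (CC3) if $X,Y\in\mathcal{C}^*$, $X\neq -Y$ and $e\in S(X,Y)$,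 then there is $Z\in\mathcal{C}^*$ with $Z^+\subseteq (X^+\cup Y^+)\setminus\{e\}$ and $Z^-\subseteq (X^-\cup Y^-)\setminus\{e\}$. The covectors of $\mathcal{M}$ are $\mathbf{0}$ together with all compositions $X^1\circ\cdots\circ X^k$ ($k\ge 1$) of cocircuits, partially ordered componentwise by $0<+$ and $0<-$ ($+,-$ incomparable); $X<T$ refers to this order. The rank $r$ of $\mathcal{M}$ is the largest $k$ such that there is a chain $\mathbf{0}=V_0<V_1<\cdots<V_k$ of covectors. $\mathcal{M}$ is uniform if $|X^0|=r-1$ for every cocircuit $X$. A tope is a covector that is maximal in this order. The cocircuit graph $G^*(\mathcal{M})$ has the cocircuits as vertices, with distinct cocircuits $X,Y$ adjacent iff $|X^0\cap Y^0|\ge r-2$ and $S(X,Y)=\emptyset$. The graph $G(T)$ of a tope $T$ is the subgraph of $G^*(\mathcal{M})$ induced by the cocircuits $X$ with $X<T$. Abstract polytope: for a finite set $T_0$, a family $\mathcal{A}$ of subsets of $T_0$ (called vertices) is a $d$-dimensional abstract polytope on ground set $T_0$ if (i) every vertex has cardinality $d$; (ii) every $(d-1)$-element subset of $T_0$ is contained in either no vertex or exactly two vertices (these two are called adjacent); (iii) for any two distinct vertices $X,Y\in\mathcal{A}$ there is a sequence $X=Z_0,Z_1,\dots,Z_k=Y$ of vertices with $Z_i,Z_{i+1}$ adjacent for all $i$ and $X\cap Y\subseteq Z_i$ for all $i$. The graph $G_{abs}(\mathcal{A})$ has vertex set $\mathcal{A}$ and edges between adjacent vertices as in (ii). *)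

theory Defs
  imports Main
begin

datatype sign = Pos | Neg | Zero

type_synonym 'e svec = "'e \<Rightarrow> sign"

definition signvecs :: "'e set \<Rightarrow> 'e svec set" where
  "signvecs E = {X. \<forall>e. e \<notin> E \<longrightarrow> X e = Zero}"

definition zerovec :: "'e svec" where "zerovec = (\<lambda>e. Zero)"

definition pos_part :: "'e svec \<Rightarrow> 'e set" where "pos_part X = {e. X e = Pos}"
definition neg_part :: "'e svec \<Rightarrow> 'e set" where "neg_part X = {e. X e = Neg}"
definition zero_part :: "'e set \<Rightarrow> 'e svec \<Rightarrow> 'e set" where
  "zero_part E X = {e \<in> E. X e = Zero}"
definition supp :: "'e svec \<Rightarrow> 'e set" where "supp X = pos_part X \<union> neg_part X"

fun sneg :: "sign \<Rightarrow> sign" where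
  "sneg Pos = Neg" | "sneg Neg = Pos" | "sneg Zero = Zero"

definition negv :: "'e svec \<Rightarrow> 'e svec" where "negv X = (\<lambda>e. sneg (X e))"

definition sep :: "'e svec \<Rightarrow> 'e svec \<Rightarrow> 'e set" where
  "sep X Y = (pos_part X \<inter> neg_part Y) \<union> (neg_part X \<inter> pos_part Y)"

definition comp :: "'e svec \<Rightarrow> 'e svec \<Rightarrow> 'e svec" where
  "comp X Y = (\<lambda>e. if X e \<noteq> Zero then X e else Y e)"

definition oriented_matroid :: "'e set \<Rightarrow> 'e svec set \<Rightarrow> bool" where
  "oriented_matroid E C \<longleftrightarrow> finite E \<and> C \<subseteq> signvecs E
    \<and> zerovec \<notin> C
    \<and> (\<forall>X\<in>C. negv X \<in> C)
    \<and> (\<forall>X\<in>C. \<forall>Y\<in>C. supp X \<subseteq> supp Y \<longrightarrow> X = Y \<or> X = negv Y)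
    \<and> (\<forall>X\<in>C. \<forall>Y\<in>C. \<forall>e. X \<noteq> negv Y \<and> e \<in> sep X Y \<longrightarrow>
         (\<exists>Z\<in>C. pos_part Z \<subseteq> (pos_part X \<union> pos_part Y) - {e}
                \<and> neg_part Z \<subseteq> (neg_part X \<union> neg_part Y) - {e}))"

text \<open>Nonzero covectors: compositions X1 o ... o Xk (k >= 1) of cocircuits.\<close>
inductive_set compositions :: "'e svec set \<Rightarrow> 'e svec set" for C where
  base: "X \<in> C \<Longrightarrow> X \<in> compositions C"
| step: "X \<in> C \<Longrightarrow> Y \<in> compositions C \<Longrightarrow> comp X Y \<in> compositions C"

definition covectors :: "'e svec set \<Rightarrow> 'e svec set" where
  "covectors C = insert zerovec (compositions C)"

definition sle :: "'e svec \<Rightarrow> 'e svec \<Rightarrow> bool" where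
  "sle X Y \<longleftrightarrow> (\<forall>e. X e = Zero \<or> X e = Y e)"

definition sless :: "'e svec \<Rightarrow> 'e svec \<Rightarrow> bool" where
  "sless X Y \<longleftrightarrow> sle X Y \<and> X \<noteq> Y"

definition om_rank :: "'e svec set \<Rightarrow> nat" where
  "om_rank C = (GREATEST k. \<exists>V :: nat \<Rightarrow> 'e svec. V 0 = zerovec
      \<and> (\<forall>i\<le>k. V i \<in> covectors C) \<and> (\<forall>i<k. sless (V i) (V (Suc i))))"

definition uniform_om :: "'e set \<Rightarrow> 'e svec set \<Rightarrow> bool" where
  "uniform_om E C \<longleftrightarrow> (\<forall>X\<in>C. card (zero_part E X) = om_rank C - 1)"

definition is_tope :: "'e svec set \<Rightarrow> 'e svec \<Rightarrow> bool" where
  "is_tope C T \<longleftrightarrow> T \<in> covectors C \<and> \<not> (\<exists>Y\<in>covectors C. sless T Y)"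

definition cocirc_adj :: "'e set \<Rightarrow> 'e svec set \<Rightarrow> 'e svec \<Rightarrow> 'e svec \<Rightarrow> bool" where
  "cocirc_adj E C X Y \<longleftrightarrow> X \<in> C \<and> Y \<in> C \<and> X \<noteq> Y
     \<and> card (zero_part E X \<inter> zero_part E Y) \<ge> om_rank C - 2
     \<and> sep X Y = {}"

definition tope_cocircuits :: "'e svec set \<Rightarrow> 'e svec \<Rightarrow> 'e svec set" where
  "tope_cocircuits C T = {X \<in> C. sless X T}"

definition abs_adj :: "'e set \<Rightarrow> 'e set set \<Rightarrow> nat \<Rightarrow> 'e set \<Rightarrow> 'e set \<Rightarrow> bool" where
  "abs_adj T0 A d V W \<longleftrightarrow> V \<in> A \<and> W \<in> A \<and> V \<noteq> W
     \<and> (\<exists>F. F \<subseteq> T0 \<and> card F = d - 1 \<and> F \<subseteq> V \<and> F \<subseteq> W)"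

definition abstract_polytope :: "'e set \<Rightarrow> 'e set set \<Rightarrow> nat \<Rightarrow> bool" where
  "abstract_polytope T0 A d \<longleftrightarrow> finite T0 \<and> A \<subseteq> Pow T0
    \<and> (\<forall>V\<in>A. card V = d)
    \<and> (\<forall>F. F \<subseteq> T0 \<and> card F = d - 1 \<longrightarrow>
          card {V\<in>A. F \<subseteq> V} = 0 \<or> card {V\<in>A. F \<subseteq> V} = 2)
    \<and> (\<forall>X\<in>A. \<forall>Y\<in>A. X \<noteq> Y \<longrightarrow>
          (\<exists>(Z :: nat \<Rightarrow> 'e set) k. Z 0 = X \<and> Z k = Y
             \<and> (\<forall>i\<le>k. Z i \<in> A \<and> X \<inter> Y \<subseteq> Z i)
             \<and> (\<forall>i<k. abs_adj T0 A d (Z i) (Z (Suc i)))))"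

end

theory Submission
  imports Defs
begin

text \<open>Let d = r - 1. In a uniform oriented matroid every d-subset of E is the zero set of a
  cocircuit, unique up to sign: follow a maximal chain of covectors down from a cocircuit, and
  at each step reach the new d-subsets by exchanging one element at a time with cocircuit
  elimination. Consequently a tope T has no zero entries, and the cocircuits below T are the
  cocircuits agreeing with T outside their zero sets.

  Given a vertex X and a (d-1)-subset F of its zero set, eliminations that repair the
  disagreements with T lead from a cocircuit through F to a second vertex through F, and
  eliminating between two vertices through F shows there is no third one. Strong connectivity
  is proved for the vertices relative to a subset R of E whose zero sets contain a common set
  S, by induction on card R + (d - card S): an element outside both zero sets is deleted and
  the resulting path lifted back to R, detouring through the vertices whose zero set contains
  the element; otherwise an exchange step enlarges S.\<close>

section \<open>Sign vectors\<close>

lemma sneg_sneg [simp]: "sneg (sneg s) = s"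
  by (cases s) auto

lemma sneg_eq_Zero_iff [simp]: "sneg s = Zero \<longleftrightarrow> s = Zero"
  by (cases s) auto

lemma sneg_neq_self: "s \<noteq> Zero \<Longrightarrow> sneg s \<noteq> s"
  by (cases s) auto

lemma nonzero_sign_cases: "a \<noteq> Zero \<Longrightarrow> b \<noteq> Zero \<Longrightarrow> b = a \<or> b = sneg a"
  by (cases a; cases b) auto

lemma negv_apply [simp]: "negv X e = sneg (X e)"
  by (simp add: negv_def)

lemma zero_part_negv [simp]: "zero_part E (negv X) = zero_part E X"
  by (simp add: zero_part_def)

lemma zero_part_subset: "zero_part E X \<subseteq> E"
  by (auto simp: zero_part_def)

lemma mem_zero_part_iff: "x \<in> zero_part E X \<longleftrightarrow> x \<in> E \<and> X x = Zero"
  by (simp add: zero_part_def)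

lemma zero_part_zerovec: "zero_part E zerovec = E"
  by (simp add: zero_part_def zerovec_def)

lemma zero_part_comp: "zero_part E (comp X Y) = zero_part E X \<inter> zero_part E Y"
  by (auto simp: comp_def zero_part_def)

lemma signvecs_nonzero_mem: "X \<in> signvecs E \<Longrightarrow> X x \<noteq> Zero \<Longrightarrow> x \<in> E"
  by (auto simp: signvecs_def)

lemma supp_eq_Diff_zero_part: "X \<in> signvecs E \<Longrightarrow> supp X = E - zero_part E X"
  by (auto simp: signvecs_def supp_def pos_part_def neg_part_def zero_part_def)
    (metis sign.exhaust)

lemma sep_iff: "e \<in> sep X Y \<longleftrightarrow> X e \<noteq> Zero \<and> Y e = sneg (X e)"
  by (cases "X e"; cases "Y e") (simp_all add: sep_def pos_part_def neg_part_def)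

lemma comp_assoc_sv: "comp (comp X Y) W = comp X (comp Y W)"
  by (simp add: comp_def fun_eq_iff)

lemma sless_zero_part_psubset:
  assumes "sless X Y" and "Y \<in> signvecs E"
  shows "zero_part E Y \<subset> zero_part E X"
proof -
  obtain x where "X x \<noteq> Y x"
    using assms(1) by (auto simp: sless_def)
  then have "X x = Zero" and "Y x \<noteq> Zero"
    using assms(1) by (auto simp: sless_def sle_def)
  then have "x \<in> zero_part E X - zero_part E Y"
    using signvecs_nonzero_mem[OF assms(2)] by (auto simp: mem_zero_part_iff)
  moreover have "zero_part E Y \<subseteq> zero_part E X"
    using assms(1) by (auto simp: sless_def sle_def zero_part_def)
  ultimately show ?thesis
    by blast
qed

lemma le_card_iff_exists_subset: "finite A \<Longrightarrow> k \<le> card A \<longleftrightarrow> (\<exists>F\<subseteq>A. card F = k)"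
  by (metis card_mono obtain_subset_with_card_n)

section \<open>Cocircuits and covectors\<close>

locale om =
  fixes E :: "'a set" and C :: "'a svec set"
  assumes axioms: "oriented_matroid E C"
begin

abbreviation zset :: "'a svec \<Rightarrow> 'a set" where
  "zset X \<equiv> zero_part E X"

lemma finite_E: "finite E"
  using axioms by (simp add: oriented_matroid_def)

lemma finite_zset: "finite (zset X)"
  using finite_subset[OF zero_part_subset finite_E] .

lemma cocircuit_signvec: "X \<in> C \<Longrightarrow> X \<in> signvecs E"
  using axioms by (auto simp: oriented_matroid_def)

lemma cocircuit_nonzero: "X \<in> C \<Longrightarrow> X \<noteq> zerovec"
  using axioms by (auto simp: oriented_matroid_def)

lemma negv_cocircuit: "X \<in> C \<Longrightarrow> negv X \<in> C"
  using axioms by (auto simp: oriented_matroid_def)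

lemma cocircuit_eq_if_zset_eq:
  assumes "X \<in> C" "Y \<in> C" "zset X = zset Y"
  shows "X = Y \<or> X = negv Y"
proof -
  have "supp X = supp Y"
    using assms supp_eq_Diff_zero_part cocircuit_signvec by metis
  then show ?thesis
    using axioms assms(1,2) by (auto simp: oriented_matroid_def)
qed

lemma cocircuit_elim:
  assumes "X \<in> C" "Y \<in> C" "X \<noteq> negv Y" "e \<in> sep X Y"
  obtains W where "W \<in> C" "W e = Zero" "\<And>x. W x = Zero \<or> W x = X x \<or> W x = Y x"
proof -
  obtain W where W: "W \<in> C" "pos_part W \<subseteq> (pos_part X \<union> pos_part Y) - {e}"
    "neg_part W \<subseteq> (neg_part X \<union> neg_part Y) - {e}"
    using axioms assms unfolding oriented_matroid_def by blast
  have "W x = Zero \<or> W x = X x \<or> W x = Y x" for x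
    using W(2,3) by (cases "W x") (auto simp: pos_part_def neg_part_def)
  moreover have "W e = Zero"
    using W(2,3) by (cases "W e") (auto simp: pos_part_def neg_part_def)
  ultimately show thesis
    using that W(1) by blast
qed

lemma compositions_signvec: "V \<in> compositions C \<Longrightarrow> V \<in> signvecs E"
proof (induction rule: compositions.induct)
  case (step X Y)
  then show ?case
    using cocircuit_signvec[of X] by (auto simp: signvecs_def comp_def)
qed (rule cocircuit_signvec)

lemma covectors_signvec: "V \<in> covectors C \<Longrightarrow> V \<in> signvecs E"
  using compositions_signvec by (auto simp: covectors_def signvecs_def zerovec_def)

lemma comp_compositions:
  "V \<in> compositions C \<Longrightarrow> W \<in> compositions C \<Longrightarrow> comp V W \<in> compositions C"
  by (induction rule: compositions.induct) (auto simp: comp_assoc_sv intro: compositions.intros)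

lemma compositions_zset_below: "V \<in> compositions C \<Longrightarrow> \<exists>X\<in>C. zset V \<subseteq> zset X"
  by (induction rule: compositions.induct) (auto simp: zero_part_comp)

lemma compositions_zset_separate:
  "V \<in> compositions C \<Longrightarrow> a \<in> E - zset V \<Longrightarrow> \<exists>X\<in>C. zset V \<subseteq> zset X \<and> a \<notin> zset X"
proof (induction rule: compositions.induct)
  case (step X Y)
  then show ?case
    by (cases "a \<in> zset X") (auto simp: zero_part_comp)
qed blast

definition covector_chain :: "nat \<Rightarrow> (nat \<Rightarrow> 'a svec) \<Rightarrow> bool" where
  "covector_chain k V \<longleftrightarrow> V 0 = zerovec \<and> (\<forall>i\<le>k. V i \<in> covectors C)
     \<and> (\<forall>i<k. sless (V i) (V (Suc i)))"

lemma covector_chain_zset_psubset: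
  "covector_chain k V \<Longrightarrow> i < k \<Longrightarrow> zset (V (Suc i)) \<subset> zset (V i)"
  by (intro sless_zero_part_psubset) (auto simp: covector_chain_def covectors_signvec)

lemma covector_chain_card_less:
  "covector_chain k V \<Longrightarrow> i < k \<Longrightarrow> card (zset (V (Suc i))) < card (zset (V i))"
  using covector_chain_zset_psubset finite_zset by (simp add: psubset_card_mono)

lemma covector_chain_card_bound:
  assumes "covector_chain k V" "i \<le> k"
  shows "card (zset (V i)) + i \<le> card E"
  using assms(2)
proof (induction i)
  case 0
  then show ?case
    using assms(1) by (simp add: covector_chain_def zero_part_zerovec)
next
  case (Suc i)
  then show ?case
    using covector_chain_card_less[OF assms(1), of i] by simp
qed

lemma covector_chain_card_ge:
  assumes "covector_chain k V" "j \<le> k"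
  shows "j \<le> card (zset (V (k - j)))"
  using assms(2)
proof (induction j)
  case (Suc j)
  have "Suc (k - Suc j) = k - j"
    using Suc.prems by simp
  then show ?case
    using Suc covector_chain_card_less[OF assms(1), of "k - Suc j"] by simp
qed simp

lemma covector_chain_rank: "\<exists>V. covector_chain (om_rank C) V"
proof -
  have "\<exists>V. covector_chain 0 V"
    by (rule exI[of _ "\<lambda>_. zerovec"]) (simp add: covector_chain_def covectors_def)
  moreover have "covector_chain k V \<Longrightarrow> k \<le> card E" for k V
    using covector_chain_card_bound[of k V k] by simp
  ultimately have "\<exists>V. covector_chain (GREATEST k. \<exists>V. covector_chain k V) V"
    using GreatestI_nat[of "\<lambda>k. \<exists>V. covector_chain k V" 0 "card E"] by blast
  then show ?thesis
    unfolding om_rank_def covector_chain_def by simp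
qed

lemma covector_chain_compositions:
  assumes "covector_chain k V" "1 \<le> i" "i \<le> k"
  shows "V i \<in> compositions C"
proof -
  have "zset (V i) \<noteq> E"
    using covector_chain_card_bound[OF assms(1,3)] assms(2) by auto
  then have "V i \<noteq> zerovec"
    using zero_part_zerovec by metis
  then show ?thesis
    using assms(1,3) unfolding covector_chain_def covectors_def by blast
qed

end

section \<open>Zero sets of cocircuits in a uniform oriented matroid\<close>

locale uom = om +
  assumes uniform: "uniform_om E C"
    and rank_ge_2: "2 \<le> om_rank C"
begin

abbreviation d :: nat where
  "d \<equiv> om_rank C - 1"

lemma card_zset: "X \<in> C \<Longrightarrow> card (zset X) = d"
  using uniform by (simp add: uniform_om_def)

lemma d_pos: "1 \<le> d"
  using rank_ge_2 by simp

lemma zset_eq_if_subset: "X \<in> C \<Longrightarrow> A \<subseteq> zset X \<Longrightarrow> card A = d \<Longrightarrow> A = zset X"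
  using card_subset_eq[OF finite_zset] card_zset by metis

lemma zset_subset_imp_eq: "X \<in> C \<Longrightarrow> Y \<in> C \<Longrightarrow> zset X \<subseteq> zset Y \<Longrightarrow> zset X = zset Y"
  using zset_eq_if_subset card_zset by metis

lemma zset_eq_insert:
  assumes "X \<in> C" "F \<subseteq> zset X" "card F = d - 1"
  obtains f where "f \<notin> F" "zset X = insert f F"
proof -
  have "card F < card (zset X)"
    using assms card_zset d_pos by simp
  then have "F \<noteq> zset X"
    by auto
  then obtain f where f: "f \<in> zset X" "f \<notin> F"
    using assms(2) by blast
  have "card (insert f F) = d"
    using f(2) finite_subset[OF assms(2) finite_zset] assms(3) d_pos by simp
  then have "insert f F = zset X"
    using zset_eq_if_subset[OF assms(1)] f(1) assms(2) by simp
  then show thesis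
    using that f(2) by blast
qed

lemma card_Int_zset_less:
  assumes "X \<in> C" "Y \<in> C" "zset X \<noteq> zset Y"
  shows "card (zset X \<inter> zset Y) < d"
proof -
  have "zset X \<inter> zset Y \<subset> zset X"
    using zset_subset_imp_eq[OF assms(1,2)] assms(3) by blast
  then show ?thesis
    using psubset_card_mono[OF finite_zset] card_zset[OF assms(1)] by metis
qed

lemma card_Un_zset_greater:
  assumes "X \<in> C" "Y \<in> C" "zset X \<noteq> zset Y"
  shows "d < card (zset X \<union> zset Y)"
proof -
  have "zset X \<subset> zset X \<union> zset Y"
    using zset_subset_imp_eq[OF assms(2,1)] assms(3) by blast
  then show ?thesis
    using psubset_card_mono finite_zset card_zset[OF assms(1)] by (metis finite_UnI)
qed

lemma card_Int_zset:
  assumes "X \<in> C" "Y \<in> C" "zset X \<noteq> zset Y" "F \<subseteq> zset X \<inter> zset Y" "card F = d - 1"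
  shows "card (zset X \<inter> zset Y) = d - 1"
proof -
  have "card F \<le> card (zset X \<inter> zset Y)"
    by (rule card_mono[OF _ assms(4)]) (simp add: finite_zset)
  then show ?thesis
    using card_Int_zset_less[OF assms(1-3)] assms(5) by simp
qed

lemma covector_chain_card_eq:
  assumes V: "covector_chain (om_rank C) V" and i: "1 \<le> i" "i \<le> om_rank C"
  shows "card (zset (V i)) = om_rank C - i"
proof -
  have "card (zset (V i)) + i \<le> om_rank C"
    using i
  proof (induction i rule: nat_induct_at_least)
    case base
    obtain X where "X \<in> C" "zset (V 1) \<subseteq> zset X"
      using compositions_zset_below covector_chain_compositions[OF V order_refl base] by blast
    then have "card (zset (V 1)) \<le> d"
      using card_mono[OF finite_zset] card_zset by metis
    then show ?case
      using rank_ge_2 by simp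
  next
    case (Suc n)
    then show ?case
      using covector_chain_card_less[OF V, of n] by simp
  qed
  moreover have "om_rank C - i \<le> card (zset (V i))"
    using covector_chain_card_ge[OF V, of "om_rank C - i"] i by simp
  ultimately show ?thesis
    by simp
qed

lemma cocircuit_elim_zset:
  assumes X: "X \<in> C" and Y: "Y \<in> C" and XY: "X \<noteq> negv Y" and e: "e \<in> sep X Y"
    and F: "F \<subseteq> zset X \<inter> zset Y" "card F = d - 1"
  shows "\<exists>W\<in>C. zset W = insert e F \<and> (\<forall>x. W x = Zero \<or> W x = X x \<or> W x = Y x)"
proof -
  obtain W where W: "W \<in> C" "W e = Zero" "\<And>x. W x = Zero \<or> W x = X x \<or> W x = Y x"
    using cocircuit_elim[OF X Y XY e] by blast
  have Xe: "X e \<noteq> Zero"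
    using e by (simp add: sep_iff)
  then have eE: "e \<in> E"
    using signvecs_nonzero_mem[OF cocircuit_signvec[OF X]] by blast
  have "x \<in> zset W" if "x \<in> F" for x
    using W(3)[of x] that F(1) by (auto simp: mem_zero_part_iff)
  then have sub: "insert e F \<subseteq> zset W"
    using W(2) eE by (auto simp: mem_zero_part_iff)
  have "e \<notin> F"
    using F(1) Xe by (auto simp: mem_zero_part_iff)
  moreover have "finite F"
    using F(1) finite_subset finite_zset by blast
  ultimately have "card (insert e F) = d"
    using F(2) d_pos by simp
  then show ?thesis
    using W sub zset_eq_if_subset by blast
qed

lemma zset_elim:
  assumes X: "X \<in> C" and Y: "Y \<in> C" and XY: "zset X \<noteq> zset Y"
    and F: "F \<subseteq> zset X \<inter> zset Y" "card F = d - 1"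
    and s: "s \<in> E" "s \<notin> zset X" "s \<notin> zset Y"
  shows "insert s F \<in> zset ` C"
proof -
  have "X s \<noteq> Zero" "Y s \<noteq> Zero"
    using s by (auto simp: mem_zero_part_iff)
  then consider "s \<in> sep X Y" | "s \<in> sep X (negv Y)"
    using nonzero_sign_cases[of "X s" "Y s"] by (auto simp: sep_iff)
  then show ?thesis
  proof cases
    case 1
    have "X \<noteq> negv Y"
      using XY by auto
    then show ?thesis
      using cocircuit_elim_zset[OF X Y _ 1 F] by blast
  next
    case 2
    moreover have "X \<noteq> negv (negv Y)"
      using XY by auto
    moreover have "F \<subseteq> zset X \<inter> zset (negv Y)"
      using F by simp
    ultimately show ?thesis
      using cocircuit_elim_zset[OF X negv_cocircuit[OF Y] _ 2 _ F(2)] by blast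
  qed
qed

text \<open>Zero sets of cocircuits are the hyperplanes of the underlying matroid.\<close>
definition hyperplanes_above :: "'a set \<Rightarrow> bool" where
  "hyperplanes_above K \<longleftrightarrow> (\<forall>S. S \<subseteq> E \<longrightarrow> K \<subseteq> S \<longrightarrow> card S = d \<longrightarrow> S \<in> zset ` C)"

lemma hyperplanes_above_zset: "X \<in> C \<Longrightarrow> hyperplanes_above (zset X)"
  unfolding hyperplanes_above_def
  by (metis card_subset_eq card_zset finite_E finite_subset image_eqI)

lemma zset_exchange:
  assumes above: "hyperplanes_above (insert a K)" and a: "a \<in> E" "a \<notin> zset H"
    and H: "H \<in> C" "K \<subseteq> zset H" and b: "b \<in> zset H" "b \<notin> K"
    and s: "s \<in> E" "s \<notin> zset H" "s \<noteq> a"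
  shows "insert s (zset H - {b}) \<in> zset ` C"
proof -
  have card_F: "card (zset H - {b}) = d - 1"
    using b(1) card_zset[OF H(1)] by simp
  have "insert a (zset H - {b}) \<subseteq> E"
    using a(1) zero_part_subset[of E H] by blast
  moreover have "insert a K \<subseteq> insert a (zset H - {b})"
    using H(2) b(2) by blast
  moreover have "card (insert a (zset H - {b})) = d"
    using card_F a(2) d_pos finite_zset by simp
  ultimately have "insert a (zset H - {b}) \<in> zset ` C"
    using above by (simp add: hyperplanes_above_def)
  then obtain Y where Y: "Y \<in> C" "zset Y = insert a (zset H - {b})"
    by blast
  show ?thesis
  proof (rule zset_elim[OF H(1) Y(1)])
    show "zset H \<noteq> zset Y"
      using Y(2) a(2) by auto
    show "zset H - {b} \<subseteq> zset H \<inter> zset Y"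
      using Y(2) by auto
    show "s \<notin> zset Y"
      using Y(2) s by auto
  qed (use card_F s in auto)
qed

lemma hyperplane_by_exchanges:
  assumes above: "hyperplanes_above (insert a K)" and a: "a \<in> E"
    and S: "S \<subseteq> E" "K \<subseteq> S" "card S = d" "a \<notin> S"
    and H: "H \<in> C" "K \<subseteq> zset H" "a \<notin> zset H"
  shows "S \<in> zset ` C"
  using H
proof (induction "card (S - zset H)" arbitrary: H rule: less_induct)
  case less
  have finite_S: "finite S"
    using S(1) finite_E finite_subset by blast
  show ?case
  proof (cases "S \<subseteq> zset H")
    case True
    then show ?thesis
      using zset_eq_if_subset[OF less.prems(1)] S(3) less.prems(1) by blast
  next
    case False
    then obtain s where s: "s \<in> S" "s \<notin> zset H"
      by blast
    have "card (zset H - S) = card (S - zset H)"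
      using card_zset[OF less.prems(1)] S(3) finite_S finite_zset
      by (simp add: card_Diff_subset_Int Int_commute)
    moreover have "card (S - zset H) \<noteq> 0"
      using s finite_S by auto
    ultimately obtain b where b: "b \<in> zset H" "b \<notin> S"
      by (metis Diff_eq_empty_iff card.empty subsetI)
    have "s \<in> E" "s \<noteq> a"
      using s S(1,4) by auto
    then have "insert s (zset H - {b}) \<in> zset ` C"
      using zset_exchange[OF above a less.prems(3) less.prems(1,2) b(1)] b(2) s(2) S(2)
      by blast
    then obtain W where W: "W \<in> C" "zset W = insert s (zset H - {b})"
      by blast
    have "S - zset W = (S - zset H) - {s}"
      using W(2) b(2) by auto
    moreover have "s \<in> S - zset H"
      using s by blast
    ultimately have "card (S - zset W) < card (S - zset H)"
      using finite_S by (metis card_Diff1_less finite_Diff)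
    moreover have "K \<subseteq> zset W" "a \<notin> zset W"
      using W(2) less.prems(2,3) b(2) S(2,4) s(1) by auto
    ultimately show ?thesis
      using less.hyps W(1) by blast
  qed
qed

text \<open>Moving one step down a maximal covector chain preserves the property that every
  d-subset above the current zero set is the zero set of a cocircuit; the d-subsets avoiding
  a are reached from a cocircuit avoiding a by repeated exchanges.\<close>
lemma hyperplanes_above_remove:
  assumes above: "hyperplanes_above (insert a K)" and a: "a \<in> E"
    and X: "X \<in> C" "K \<subseteq> zset X" "a \<notin> zset X"
  shows "hyperplanes_above K"
  unfolding hyperplanes_above_def
proof (intro allI impI)
  fix S assume S: "S \<subseteq> E" "K \<subseteq> S" "card S = d"
  show "S \<in> zset ` C"
  proof (cases "a \<in> S")
    case True
    then show ?thesis
      using above S by (simp add: hyperplanes_above_def)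
  next
    case False
    show ?thesis
      by (rule hyperplane_by_exchanges[OF above a S False X])
  qed
qed

lemma card_d_subset_zset:
  assumes "S \<subseteq> E" "card S = d"
  shows "S \<in> zset ` C"
proof -
  obtain V where V: "covector_chain (om_rank C) V"
    using covector_chain_rank by blast
  have "hyperplanes_above (zset (V i))" if "1 \<le> i" "i \<le> om_rank C" for i
    using that
  proof (induction i rule: nat_induct_at_least)
    case base
    obtain X where X: "X \<in> C" "zset (V 1) \<subseteq> zset X"
      using compositions_zset_below covector_chain_compositions[OF V order_refl base] by blast
    have "zset (V 1) = zset X"
      using zset_eq_if_subset[OF X] covector_chain_card_eq[OF V order_refl base] by simp
    then show ?case
      using hyperplanes_above_zset[OF X(1)] by simp
  next
    case (Suc n)
    have "zset (V (Suc n)) \<subset> zset (V n)"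
      using covector_chain_zset_psubset[OF V] Suc by simp
    moreover have "card (zset (V n)) = Suc (card (zset (V (Suc n))))"
      using covector_chain_card_eq[OF V] Suc by simp
    ultimately obtain a where a: "a \<notin> zset (V (Suc n))" "zset (V n) = insert a (zset (V (Suc n)))"
      by (metis card_insert_disjoint card_subset_eq finite_zset insert_subset psubset_eq
          psubset_imp_ex_mem Diff_iff)
    then have aE: "a \<in> E"
      using zero_part_subset[of E "V n"] by blast
    obtain X where "X \<in> C" "zset (V (Suc n)) \<subseteq> zset X" "a \<notin> zset X"
      using compositions_zset_separate[OF covector_chain_compositions[OF V]] Suc a(1) aE by force
    then show ?case
      using hyperplanes_above_remove[OF _ aE] Suc a(2) by simp
  qed
  moreover have "zset (V (om_rank C)) = {}"
    using covector_chain_card_eq[OF V, of "om_rank C"] rank_ge_2 finite_zset by simp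
  ultimately have "hyperplanes_above {}"
    using rank_ge_2 by (metis one_le_numeral order_trans order_refl)
  then show ?thesis
    using assms by (simp add: hyperplanes_above_def)
qed

lemma exists_cocircuit: "\<exists>X. X \<in> C"
  using covector_chain_rank covector_chain_compositions compositions_zset_below rank_ge_2
  by (metis one_le_numeral order_trans)

lemma exists_notin_zset:
  assumes "X \<in> C"
  obtains x where "x \<in> E" "x \<notin> zset X"
proof -
  obtain x where "X x \<noteq> Zero"
    using cocircuit_nonzero[OF assms] by (auto simp: zerovec_def)
  then show thesis
    using that signvecs_nonzero_mem[OF cocircuit_signvec[OF assms]] by (auto simp: mem_zero_part_iff)
qed

lemma d_less_card_E: "d < card E"
proof -
  obtain X x where X: "X \<in> C" and x: "x \<in> E" "x \<notin> zset X"
    using exists_cocircuit exists_notin_zset by metis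
  then have "zset X \<subset> E"
    using zero_part_subset[of E X] by blast
  then show ?thesis
    using psubset_card_mono[OF finite_E] card_zset[OF \<open>X \<in> C\<close>] by metis
qed

end

section \<open>Vertices of a tope\<close>

locale uom_tope = uom +
  fixes T :: "'a svec"
  assumes tope: "is_tope C T"
begin

text \<open>Otherwise composing T with a cocircuit that is nonzero at x would give a covector
  strictly above T.\<close>
lemma tope_nonzero:
  assumes x: "x \<in> E"
  shows "T x \<noteq> Zero"
proof
  assume Tx: "T x = Zero"
  have "d \<le> card (E - {x})"
    using d_less_card_E x finite_E by simp
  then obtain S where S: "S \<subseteq> E - {x}" "card S = d"
    by (meson obtain_subset_with_card_n)
  then obtain X where X: "X \<in> C" "zset X = S"
    using card_d_subset_zset by (metis Diff_subset image_iff order_trans)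
  have Xx: "X x \<noteq> Zero"
    using X S x by (auto simp: mem_zero_part_iff)
  have "comp T X \<in> covectors C"
  proof (cases "T = zerovec")
    case True
    then show ?thesis
      using X(1) by (simp add: comp_def zerovec_def covectors_def compositions.base)
  next
    case False
    then show ?thesis
      using tope comp_compositions compositions.base[OF X(1)] by (simp add: is_tope_def covectors_def)
  qed
  moreover have "sle T (comp T X)"
    by (simp add: sle_def comp_def)
  moreover have "T \<noteq> comp T X"
    using Tx Xx by (metis comp_def)
  ultimately show False
    using tope by (auto simp: is_tope_def sless_def)
qed

text \<open>For R = E these are the vertices of T; shrinking R lets the connectivity proof discard
  one element at a time.\<close>
definition vertex :: "'a set \<Rightarrow> 'a svec \<Rightarrow> bool" where
  "vertex R X \<longleftrightarrow> X \<in> C \<and> zset X \<subseteq> R \<and> (\<forall>x\<in>R. X x = Zero \<or> X x = T x)"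

lemma vertex_agrees:
  "vertex R X \<Longrightarrow> R \<subseteq> E \<Longrightarrow> x \<in> R \<Longrightarrow> x \<notin> zset X \<Longrightarrow> X x = T x"
  by (auto simp: vertex_def mem_zero_part_iff)

lemma vertex_insert: "vertex (R - {e}) X \<Longrightarrow> X e = T e \<Longrightarrow> vertex R X"
  by (auto simp: vertex_def)

lemma vertex_unique:
  assumes R: "R \<subseteq> E" and X: "vertex R X" and Y: "vertex R Y" and XY: "zset X = zset Y"
    and x: "x \<in> R" "x \<notin> zset X"
  shows "X = Y"
proof -
  have "X x = T x" "Y x = T x"
    using vertex_agrees[OF X R x] vertex_agrees[OF Y R x(1)] x(2) XY by auto
  then have "X \<noteq> negv Y"
    using sneg_neq_self tope_nonzero R x(1) by (metis negv_apply subsetD)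
  then show ?thesis
    using cocircuit_eq_if_zset_eq XY X Y by (auto simp: vertex_def)
qed

lemma vertex_unique_if_card:
  assumes "R \<subseteq> E" "d < card R" "vertex R X" "vertex R Y" "zset X = zset Y"
  shows "X = Y"
proof -
  have "card (zset X) < card R"
    using assms(2,3) card_zset by (simp add: vertex_def)
  then have "\<not> R \<subseteq> zset X"
    using card_mono[OF finite_zset] leD by blast
  then obtain x where "x \<in> R" "x \<notin> zset X"
    by blast
  then show ?thesis
    using vertex_unique assms by blast
qed

lemma vertex_if_sep_empty:
  assumes "Y \<in> C" "zset Y \<subseteq> R" "R \<subseteq> E" "sep Y T \<inter> R = {}"
  shows "vertex R Y"
  unfolding vertex_def
proof (intro conjI ballI assms(1,2))
  fix x assume x: "x \<in> R"
  show "Y x = Zero \<or> Y x = T x"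
  proof (rule ccontr)
    assume "\<not> (Y x = Zero \<or> Y x = T x)"
    then have "x \<in> sep Y T"
      using nonzero_sign_cases[of "Y x" "T x"] tope_nonzero[of x] x assms(3)
      by (auto simp: sep_iff)
    then show False
      using x assms(4) by blast
  qed
qed

lemma tope_cocircuits_iff_vertex: "X \<in> tope_cocircuits C T \<longleftrightarrow> vertex E X"
proof
  assume "X \<in> tope_cocircuits C T"
  then show "vertex E X"
    using zero_part_subset[of E X] by (auto simp: tope_cocircuits_def vertex_def sless_def sle_def)
next
  assume v: "vertex E X"
  then have X: "X \<in> C"
    by (simp add: vertex_def)
  have "sle X T"
    using v signvecs_nonzero_mem[OF cocircuit_signvec[OF X]] by (auto simp: vertex_def sle_def)
  moreover obtain x where "x \<in> zset X"
    using card_zset[OF X] d_pos by fastforce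
  then have "X \<noteq> T"
    using tope_nonzero by (auto simp: mem_zero_part_iff)
  ultimately show "X \<in> tope_cocircuits C T"
    using X by (simp add: tope_cocircuits_def sless_def)
qed

lemma sep_eliminant_subset:
  assumes R: "R \<subseteq> E" and X: "vertex R X"
    and W: "W e = Zero" "\<forall>x. W x = Zero \<or> W x = X x \<or> W x = Y x"
  shows "sep W T \<inter> R \<subseteq> sep Y T \<inter> R - {e}"
proof
  fix x assume x: "x \<in> sep W T \<inter> R"
  then have Wx: "W x \<noteq> Zero" "T x = sneg (W x)"
    by (auto simp: sep_iff)
  have "W x \<noteq> X x"
    using vertex_agrees[OF X R, of x] x Wx sneg_neq_self R
    by (metis IntD2 mem_zero_part_iff sneg_eq_Zero_iff subsetD)
  then have "W x = Y x"
    using W(2) Wx(1) by metis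
  then show "x \<in> sep Y T \<inter> R - {e}"
    using Wx x W(1) by (auto simp: sep_iff)
qed

text \<open>One step of the search for a second vertex through F: eliminating e between X and Y
  repairs a sign of Y that disagrees with T without creating new disagreements.\<close>
lemma sep_descent:
  assumes R: "R \<subseteq> E" and X: "vertex R X" "zset X = insert f F" "f \<notin> F" "card F = d - 1"
    and Y: "Y \<in> C" "F \<subseteq> zset Y" "zset Y \<subseteq> R" "Y f = T f"
    and e: "e \<in> sep Y T" "e \<in> R"
  shows "\<exists>W\<in>C. F \<subseteq> zset W \<and> zset W \<subseteq> R \<and> W f = T f \<and> sep W T \<inter> R \<subset> sep Y T \<inter> R"
proof -
  have XC: "X \<in> C"
    using X(1) by (simp add: vertex_def)
  have fE: "f \<in> E" and Tf: "T f \<noteq> Zero"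
    using X(2) zero_part_subset[of E X] tope_nonzero by auto
  have Ye: "Y e \<noteq> Zero" and Te: "T e = sneg (Y e)"
    using e(1) by (auto simp: sep_iff)
  have "e \<noteq> f"
    using Te Y(4) Tf sneg_neq_self by metis
  moreover have "e \<notin> F"
    using Ye Y(2) by (auto simp: mem_zero_part_iff)
  ultimately have "e \<notin> zset X"
    using X(2) by auto
  then have "e \<in> sep X Y"
    using vertex_agrees[OF X(1) R e(2)] Ye Te R e(2) by (auto simp: sep_iff mem_zero_part_iff)
  moreover have "X \<noteq> negv Y"
  proof
    assume "X = negv Y"
    moreover have "f \<in> zset X"
      using X(2) by simp
    ultimately show False
      using Y(4) Tf by (simp add: mem_zero_part_iff)
  qed
  moreover have "F \<subseteq> zset X \<inter> zset Y"
    using X(2) Y(2) by auto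
  ultimately obtain W where W: "W \<in> C" "zset W = insert e F"
      "\<forall>x. W x = Zero \<or> W x = X x \<or> W x = Y x"
    using cocircuit_elim_zset[OF XC Y(1)] X(4) by blast
  have We: "W e = Zero"
    using W(2) e(2) R by (auto simp: mem_zero_part_iff)
  have "W f \<noteq> Zero"
    using W(2) \<open>e \<noteq> f\<close> X(3) fE by (auto simp: mem_zero_part_iff)
  then have Wf: "W f = T f"
    using W(3) X(2) Y(4) by (metis insertI1 mem_zero_part_iff)
  have "sep W T \<inter> R \<subseteq> sep Y T \<inter> R - {e}"
    using sep_eliminant_subset[OF R X(1) We W(3)] .
  then have "sep W T \<inter> R \<subset> sep Y T \<inter> R"
    using e by blast
  moreover have "zset W \<subseteq> R"
    using W(2) e(2) X(1,2) by (auto simp: vertex_def)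
  ultimately show ?thesis
    using W(1,2) Wf by blast
qed

lemma exists_vertex_by_descent:
  assumes R: "R \<subseteq> E" and X: "vertex R X" "zset X = insert f F" "f \<notin> F" "card F = d - 1"
    and Y: "Y \<in> C" "F \<subseteq> zset Y" "zset Y \<subseteq> R" "Y f = T f"
  shows "\<exists>Y. vertex R Y \<and> F \<subseteq> zset Y \<and> Y f = T f"
  using Y
proof (induction "card (sep Y T \<inter> R)" arbitrary: Y rule: less_induct)
  case less
  show ?case
  proof (cases "sep Y T \<inter> R = {}")
    case True
    then show ?thesis
      using vertex_if_sep_empty[OF less.prems(1) less.prems(3) R] less.prems by blast
  next
    case False
    then obtain e where "e \<in> sep Y T" "e \<in> R"
      by blast
    then obtain W where W: "W \<in> C" "F \<subseteq> zset W" "zset W \<subseteq> R" "W f = T f"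
        "sep W T \<inter> R \<subset> sep Y T \<inter> R"
      using sep_descent[OF R X less.prems] by blast
    moreover have "card (sep W T \<inter> R) < card (sep Y T \<inter> R)"
      using psubset_card_mono[OF _ W(5)] finite_subset[OF R finite_E] by blast
    ultimately show ?thesis
      using less.hyps by blast
  qed
qed

lemma exists_cocircuit_zset_sign:
  assumes "S \<subseteq> E" "card S = d" "f \<in> E" "f \<notin> S"
  shows "\<exists>Y\<in>C. zset Y = S \<and> Y f = T f"
proof -
  obtain Y where Y: "Y \<in> C" "zset Y = S"
    using card_d_subset_zset[OF assms(1,2)] by blast
  then have "Y f \<noteq> Zero"
    using assms(3,4) by (auto simp: mem_zero_part_iff)
  then have "Y f = T f \<or> negv Y f = T f"
    using nonzero_sign_cases[OF tope_nonzero[OF assms(3)], of "Y f"] by auto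
  then show ?thesis
    using Y negv_cocircuit[OF Y(1)] zero_part_negv[of E Y] by blast
qed

lemma exists_adjacent_vertex:
  assumes R: "R \<subseteq> E" and X: "vertex R X" and F: "F \<subseteq> zset X" "card F = d - 1"
    and g: "g \<in> R" "g \<notin> zset X"
  shows "\<exists>Y. vertex R Y \<and> F \<subseteq> zset Y \<and> zset Y \<noteq> zset X"
proof -
  have XC: "X \<in> C"
    using X by (simp add: vertex_def)
  obtain f where f: "f \<notin> F" "zset X = insert f F"
    using zset_eq_insert[OF XC F] .
  have fE: "f \<in> E"
    using f(2) zero_part_subset[of E X] by auto
  have "g \<notin> F" "f \<noteq> g"
    using g(2) F(1) f(2) by auto
  then have "insert g F \<subseteq> E" "card (insert g F) = d" "f \<notin> insert g F"
    using g R F f zero_part_subset[of E X] finite_subset[OF F(1) finite_zset] d_pos by auto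
  then obtain Y0 where "Y0 \<in> C" "zset Y0 = insert g F" "Y0 f = T f"
    using exists_cocircuit_zset_sign fE by blast
  moreover have "insert g F \<subseteq> R"
    using g(1) F(1) X by (auto simp: vertex_def)
  ultimately obtain Y where Y: "vertex R Y" "F \<subseteq> zset Y" "Y f = T f"
    using exists_vertex_by_descent[OF R X f(2) f(1) F(2)] by blast
  moreover have "f \<notin> zset Y"
    using Y(3) tope_nonzero[OF fE] by (simp add: mem_zero_part_iff)
  then have "zset Y \<noteq> zset X"
    using f(2) by auto
  ultimately show ?thesis
    by blast
qed

text \<open>Eliminating g2 between X and -Y1 yields a cocircuit with the zero set of Y2, hence
  Y2 or -Y2; but it disagrees with T at f and agrees with T at g1, while Y2 agrees at both.\<close>
lemma at_most_two_vertices: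
  assumes R: "R \<subseteq> E" and vertices: "vertex R X" "vertex R Y1" "vertex R Y2"
    and F: "F \<subseteq> zset X" "F \<subseteq> zset Y1" "F \<subseteq> zset Y2" "card F = d - 1"
    and distinct: "zset X \<noteq> zset Y1" "zset X \<noteq> zset Y2" "zset Y1 \<noteq> zset Y2"
  shows False
proof -
  have XC: "X \<in> C" and Y1C: "Y1 \<in> C" and Y2C: "Y2 \<in> C"
    using vertices by (auto simp: vertex_def)
  obtain f where f: "f \<notin> F" "zset X = insert f F"
    using zset_eq_insert[OF XC F(1,4)] .
  obtain g1 where g1: "g1 \<notin> F" "zset Y1 = insert g1 F"
    using zset_eq_insert[OF Y1C F(2,4)] .
  obtain g2 where g2: "g2 \<notin> F" "zset Y2 = insert g2 F"
    using zset_eq_insert[OF Y2C F(3,4)] .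
  have in_R: "f \<in> R" "g1 \<in> R" "g2 \<in> R"
    using vertices f g1 g2 by (auto simp: vertex_def)
  have ne: "g1 \<noteq> f" "g2 \<noteq> f" "g1 \<noteq> g2"
    using f g1 g2 distinct by auto
  then have "g1 \<notin> zset X" "g2 \<notin> zset X" "f \<notin> zset Y1" "g2 \<notin> zset Y1" "f \<notin> zset Y2"
    "g1 \<notin> zset Y2"
    using f g1 g2 by auto
  then have agree: "X g1 = T g1" "X g2 = T g2" "Y1 f = T f" "Y1 g2 = T g2" "Y2 f = T f"
    "Y2 g1 = T g1"
    using in_R by (simp_all add: vertex_agrees[OF vertices(1) R] vertex_agrees[OF vertices(2) R]
        vertex_agrees[OF vertices(3) R])
  have nonzero: "T f \<noteq> Zero" "T g1 \<noteq> Zero" "T g2 \<noteq> Zero"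
    using tope_nonzero in_R R by auto
  have "g2 \<in> sep X (negv Y1)"
    using agree nonzero by (simp add: sep_iff)
  moreover have "X \<noteq> negv (negv Y1)"
    using distinct by auto
  moreover have "F \<subseteq> zset X \<inter> zset (negv Y1)"
    using F by simp
  ultimately obtain W where W: "W \<in> C" "zset W = insert g2 F"
      "\<forall>x. W x = Zero \<or> W x = X x \<or> W x = negv Y1 x"
    using cocircuit_elim_zset[OF XC negv_cocircuit[OF Y1C]] F(4) by blast
  have "f \<in> E" "g1 \<in> E"
    using in_R R by auto
  then have "W f \<noteq> Zero" "W g1 \<noteq> Zero" "X f = Zero" "Y1 g1 = Zero"
    using W(2) f g1 ne by (auto simp: mem_zero_part_iff)
  then have "W f = sneg (T f)" "W g1 = T g1"
    using W(3) agree by (metis negv_apply sneg_eq_Zero_iff)+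
  moreover have "W = Y2 \<or> W = negv Y2"
    using cocircuit_eq_if_zset_eq[OF W(1) Y2C] W(2) g2(2) by simp
  ultimately show False
    using agree nonzero sneg_neq_self by (metis negv_apply)
qed

section \<open>Connectivity\<close>

definition adj_vertex :: "'a set \<Rightarrow> 'a set \<Rightarrow> 'a svec \<Rightarrow> 'a svec \<Rightarrow> bool" where
  "adj_vertex R S X Y \<longleftrightarrow> vertex R X \<and> vertex R Y \<and> S \<subseteq> zset X \<inter> zset Y
     \<and> zset X \<noteq> zset Y \<and> card (zset X \<inter> zset Y) = d - 1"

definition vertex_connected :: "'a set \<Rightarrow> 'a set \<Rightarrow> bool" where
  "vertex_connected R S \<longleftrightarrow> (\<forall>X Y. vertex R X \<longrightarrow> vertex R Y \<longrightarrow> S \<subseteq> zset X \<inter> zset Y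
     \<longrightarrow> (adj_vertex R S)\<^sup>*\<^sup>* X Y)"

lemma adj_vertex_sym: "adj_vertex R S X Y \<Longrightarrow> adj_vertex R S Y X"
  by (auto simp: adj_vertex_def Int_commute)

lemma adj_vertex_path_mono:
  assumes "(adj_vertex R S')\<^sup>*\<^sup>* X Y" "S \<subseteq> S'"
  shows "(adj_vertex R S)\<^sup>*\<^sup>* X Y"
proof -
  have "adj_vertex R S' \<le> adj_vertex R S"
    using assms(2) unfolding le_fun_def le_bool_def adj_vertex_def by blast
  then show ?thesis
    using assms(1) rtranclp_mono by (metis predicate2D)
qed

lemma vertex_eliminant:
  assumes R: "R \<subseteq> E" and P: "vertex R P" and B: "vertex (R - {e}) B"
    and N: "N \<in> C" "zset N \<subseteq> R" "N e = Zero" "\<forall>x. N x = Zero \<or> N x = P x \<or> N x = B x"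
  shows "vertex R N"
  unfolding vertex_def
proof (intro conjI ballI N(1,2))
  fix x assume x: "x \<in> R"
  consider "N x = Zero" | "N x \<noteq> Zero" "N x = P x" | "N x \<noteq> Zero" "N x = B x"
    using N(4) by blast
  then show "N x = Zero \<or> N x = T x"
  proof cases
    case 2
    then show ?thesis
      using vertex_agrees[OF P R x] x R by (auto simp: mem_zero_part_iff)
  next
    case 3
    then have "x \<in> R - {e}"
      using N(3) x by auto
    then show ?thesis
      using 3 vertex_agrees[OF B, of x] R by (auto simp: mem_zero_part_iff)
  qed simp
qed

lemma adj_vertex_lift:
  assumes R: "R \<subseteq> E" "e \<in> R" and P: "vertex R P" "P e = T e"
    and B: "vertex (R - {e}) B" "B e \<noteq> T e" and PB: "adj_vertex (R - {e}) S P B"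
  shows "\<exists>N. adj_vertex R S P N \<and> e \<in> zset N"
proof -
  have PC: "P \<in> C" and BC: "B \<in> C"
    using P B by (auto simp: vertex_def)
  have eE: "e \<in> E"
    using R by blast
  have Te: "T e \<noteq> Zero"
    using tope_nonzero[OF eE] .
  have "B e \<noteq> Zero"
    using B(1) eE by (auto simp: vertex_def mem_zero_part_iff)
  then have "B e = sneg (P e)"
    using nonzero_sign_cases[OF Te] P(2) B(2) by metis
  then have "e \<in> sep P B"
    using P(2) Te by (simp add: sep_iff)
  moreover have "P \<noteq> negv B" "card (zset P \<inter> zset B) = d - 1"
    using PB by (auto simp: adj_vertex_def)
  ultimately obtain N where N: "N \<in> C" "zset N = insert e (zset P \<inter> zset B)"
      "\<forall>x. N x = Zero \<or> N x = P x \<or> N x = B x"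
    using cocircuit_elim_zset[OF PC BC] by blast
  have Ne: "N e = Zero"
    using N(2) eE by (metis insertI1 mem_zero_part_iff)
  have "zset N \<subseteq> R"
    using N(2) P(1) R(2) by (auto simp: vertex_def)
  then have "vertex R N"
    using vertex_eliminant[OF R(1) P(1) B(1) N(1) _ Ne N(3)] by blast
  moreover have "e \<notin> zset P"
    using P(2) Te by (simp add: mem_zero_part_iff)
  then have "zset P \<inter> zset N = zset P \<inter> zset B" "zset P \<noteq> zset N"
    using N(2) by auto
  ultimately have "adj_vertex R S P N"
    using PB P(1) by (simp add: adj_vertex_def)
  then show ?thesis
    using N(2) by blast
qed

lemma rejoin_tope_side:
  assumes R: "R \<subseteq> E" "e \<in> R" and connected: "vertex_connected R (insert e S)"
    and N: "vertex R N" "insert e S \<subseteq> zset N"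
    and W: "vertex (R - {e}) W" "W e \<noteq> T e" and W': "vertex R W'" "W' e = T e"
    and adj: "adj_vertex (R - {e}) S W W'"
  shows "(adj_vertex R S)\<^sup>*\<^sup>* N W'"
proof -
  obtain N' where N': "adj_vertex R S W' N'" "e \<in> zset N'"
    using adj_vertex_lift[OF R W' W adj_vertex_sym[OF adj]] by blast
  then have "(adj_vertex R (insert e S))\<^sup>*\<^sup>* N N'"
    using connected N by (auto simp: vertex_connected_def adj_vertex_def)
  then have "(adj_vertex R S)\<^sup>*\<^sup>* N N'"
    by (rule adj_vertex_path_mono) blast
  then show ?thesis
    using adj_vertex_sym[OF N'(1)] by (simp add: rtranclp.rtrancl_into_rtrancl)
qed

text \<open>On a path in R - {e}, the stretches on the same side of e as T are paths in R, and each
  excursion to the other side is bridged through the vertices whose zero set contains e.\<close>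
lemma lift_path:
  assumes R: "R \<subseteq> E" "e \<in> R" and X: "vertex R X" "e \<notin> zset X"
    and connected: "vertex_connected R (insert e S)"
    and path: "(adj_vertex (R - {e}) S)\<^sup>*\<^sup>* X W"
  shows "(W e = T e \<longrightarrow> (adj_vertex R S)\<^sup>*\<^sup>* X W)
    \<and> (W e \<noteq> T e \<longrightarrow> (\<exists>N. vertex R N \<and> insert e S \<subseteq> zset N \<and> (adj_vertex R S)\<^sup>*\<^sup>* X N))"
  using path
proof (induction rule: rtranclp_induct)
  case base
  show ?case
    using vertex_agrees[OF X(1) R(1,2) X(2)] by simp
next
  case (step W W')
  then have W: "vertex (R - {e}) W" and W': "vertex (R - {e}) W'"
    by (auto simp: adj_vertex_def)
  consider (stay) "W e = T e" "W' e = T e" | (leave) "W e = T e" "W' e \<noteq> T e"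
    | (return) "W e \<noteq> T e" "W' e = T e" | (away) "W e \<noteq> T e" "W' e \<noteq> T e"
    by blast
  then show ?case
  proof cases
    case stay
    then have "adj_vertex R S W W'"
      using step.hyps(2) vertex_insert[OF W] vertex_insert[OF W'] by (auto simp: adj_vertex_def)
    then show ?thesis
      using step.IH stay by (simp add: rtranclp.rtrancl_into_rtrancl)
  next
    case leave
    obtain N where N: "adj_vertex R S W N" "e \<in> zset N"
      using adj_vertex_lift[OF R vertex_insert[OF W leave(1)] leave(1) W' leave(2) step.hyps(2)]
      by blast
    have "(adj_vertex R S)\<^sup>*\<^sup>* X N"
      using step.IH leave N(1) by (meson rtranclp.rtrancl_into_rtrancl)
    moreover have "vertex R N" "insert e S \<subseteq> zset N"
      using N by (auto simp: adj_vertex_def)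
    ultimately show ?thesis
      using leave by blast
  next
    case return
    obtain N where "vertex R N" "insert e S \<subseteq> zset N" "(adj_vertex R S)\<^sup>*\<^sup>* X N"
      using step.IH return by blast
    then show ?thesis
      using rejoin_tope_side[OF R connected _ _ W return(1) vertex_insert[OF W' return(2)]
          return(2) step.hyps(2)]
      by (meson rtranclp_trans)
  next
    case away
    then show ?thesis
      using step.IH by blast
  qed
qed

lemma exists_adj_vertex_keeping_common:
  assumes R: "R \<subseteq> E" and X: "vertex R X" and Y: "vertex R Y" and XY: "zset X \<noteq> zset Y"
  shows "\<exists>X'. adj_vertex R (zset X \<inter> zset Y) X X' \<and> zset X \<inter> zset Y \<subseteq> zset X'"
proof -
  have XC: "X \<in> C" and YC: "Y \<in> C"
    using X Y by (auto simp: vertex_def)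
  obtain h where h: "h \<in> zset X" "h \<notin> zset Y"
    using zset_subset_imp_eq[OF XC YC] XY by blast
  obtain g where g: "g \<in> zset Y" "g \<notin> zset X"
    using zset_subset_imp_eq[OF YC XC] XY by blast
  have F: "zset X - {h} \<subseteq> zset X" "card (zset X - {h}) = d - 1"
    using h card_zset[OF XC] by auto
  have "g \<in> R"
    using g(1) Y by (auto simp: vertex_def)
  then obtain X' where X': "vertex R X'" "zset X - {h} \<subseteq> zset X'" "zset X' \<noteq> zset X"
    using exists_adjacent_vertex[OF R X F _ g(2)] by blast
  have "X' \<in> C"
    using X' by (simp add: vertex_def)
  then have "adj_vertex R (zset X \<inter> zset Y) X X'"
    using card_Int_zset[OF XC _ _ _ F(2)] X X' h(2) by (auto simp: adj_vertex_def)
  then show ?thesis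
    using X'(2) h(2) by blast
qed

lemma connected_via_exchange:
  assumes R: "R \<subseteq> E" and X: "vertex R X" and Y: "vertex R Y" and XY: "zset X \<noteq> zset Y"
    and cover: "R \<subseteq> zset X \<union> zset Y" and S: "S \<subseteq> zset X \<inter> zset Y"
    and connected: "\<And>S'. S \<subset> S' \<Longrightarrow> S' \<subseteq> E \<Longrightarrow> vertex_connected R S'"
  shows "(adj_vertex R S)\<^sup>*\<^sup>* X Y"
proof -
  obtain X' where X': "adj_vertex R (zset X \<inter> zset Y) X X'" "zset X \<inter> zset Y \<subseteq> zset X'"
    using exists_adj_vertex_keeping_common[OF R X Y XY] by blast
  then have vX': "vertex R X'" and X'C: "X' \<in> C" and XX': "zset X \<noteq> zset X'"
    by (auto simp: adj_vertex_def vertex_def)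
  have XC: "X \<in> C"
    using X by (simp add: vertex_def)
  have S': "S \<subseteq> zset X' \<inter> zset Y"
    using S X'(2) by blast
  have "(adj_vertex R S)\<^sup>*\<^sup>* X' Y"
  proof (cases "zset X' = zset Y")
    case True
    obtain x where "x \<in> zset X" "x \<notin> zset X'"
      using zset_subset_imp_eq[OF XC X'C] XX' by blast
    then have "X' = Y"
      using vertex_unique[OF R vX' Y True] X by (auto simp: vertex_def)
    then show ?thesis
      by simp
  next
    case False
    obtain g' where "g' \<in> zset X'" "g' \<notin> zset X"
      using zset_subset_imp_eq[OF X'C XC] XX' by blast
    then have "S \<subset> zset X' \<inter> zset Y"
      using vX' cover S' S by (auto simp: vertex_def)
    moreover have "zset X' \<inter> zset Y \<subseteq> E"
      using zero_part_subset[of E Y] by blast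
    ultimately have "vertex_connected R (zset X' \<inter> zset Y)"
      by (rule connected)
    then have "(adj_vertex R (zset X' \<inter> zset Y))\<^sup>*\<^sup>* X' Y"
      using vX' Y by (simp add: vertex_connected_def)
    then show ?thesis
      using S' by (rule adj_vertex_path_mono)
  qed
  moreover have "adj_vertex R S X X'"
    using X'(1) S by (auto simp: adj_vertex_def)
  ultimately show ?thesis
    by (meson converse_rtranclp_into_rtranclp)
qed

lemma connected_via_free_element:
  assumes R: "R \<subseteq> E" "e \<in> R" and X: "vertex R X" and Y: "vertex R Y"
    and e: "e \<notin> zset X" "e \<notin> zset Y" and S: "S \<subseteq> zset X \<inter> zset Y"
    and connected: "vertex_connected (R - {e}) S" "vertex_connected R (insert e S)"
  shows "(adj_vertex R S)\<^sup>*\<^sup>* X Y"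
proof -
  have "vertex (R - {e}) X" "vertex (R - {e}) Y"
    using X Y e by (auto simp: vertex_def)
  then have "(adj_vertex (R - {e}) S)\<^sup>*\<^sup>* X Y"
    using connected(1) S by (simp add: vertex_connected_def)
  then show ?thesis
    using lift_path[OF R X e(1) connected(2)] vertex_agrees[OF Y R e(2)] by blast
qed

lemma vertex_connected:
  assumes "R \<subseteq> E" "d < card R"
  shows "vertex_connected R S"
  using assms
proof (induction "card R + (d - card S)" arbitrary: R S rule: less_induct)
  case less
  have finite_R: "finite R"
    using finite_subset[OF less.prems(1) finite_E] .
  show ?case
    unfolding vertex_connected_def
  proof (intro allI impI)
    fix X Y assume X: "vertex R X" and Y: "vertex R Y" and S: "S \<subseteq> zset X \<inter> zset Y"
    have XC: "X \<in> C" and YC: "Y \<in> C"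
      using X Y by (auto simp: vertex_def)
    show "(adj_vertex R S)\<^sup>*\<^sup>* X Y"
    proof (cases "zset X = zset Y")
      case True
      then show ?thesis
        using vertex_unique_if_card less.prems X Y by (metis rtranclp.rtrancl_refl)
    next
      case XY: False
      have "card S < d"
        using card_mono[OF _ S] card_Int_zset_less[OF XC YC XY] finite_zset by fastforce
      then have larger_S: "vertex_connected R S'" if "S \<subset> S'" "S' \<subseteq> E" for S'
        using less.hyps less.prems psubset_card_mono[OF finite_subset[OF _ finite_E] that(1)] that(2)
        by simp
      show ?thesis
      proof (cases "R \<subseteq> zset X \<union> zset Y")
        case True
        then show ?thesis
          using connected_via_exchange[OF less.prems(1) X Y XY True S larger_S] by blast
      next
        case False
        then obtain e where e: "e \<in> R" "e \<notin> zset X" "e \<notin> zset Y"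
          by blast
        have "zset X \<union> zset Y \<subseteq> R - {e}"
          using X Y e by (auto simp: vertex_def)
        then have "d < card (R - {e})"
          using card_Un_zset_greater[OF XC YC XY] card_mono finite_R
          by (metis finite_Diff order_less_le_trans)
        moreover have "card (R - {e}) < card R"
          using finite_R e(1) by (rule card_Diff1_less)
        ultimately have "vertex_connected (R - {e}) S"
          using less.hyps[of "R - {e}" S] less.prems(1) by auto
        moreover have "vertex_connected R (insert e S)"
          using larger_S e(1,2) S less.prems(1) zero_part_subset[of E X] by blast
        ultimately show ?thesis
          using connected_via_free_element[OF less.prems(1) e(1) X Y e(2,3) S] by blast
      qed
    qed
  qed
qed

section \<open>The abstract polytope\<close>

lemma inj_on_zset_tope_cocircuits: "inj_on zset (tope_cocircuits C T)"
  using vertex_unique_if_card[OF order_refl d_less_card_E]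
  by (auto simp: inj_on_def tope_cocircuits_iff_vertex)

lemma card_vertex_sets_containing:
  assumes F: "F \<subseteq> E" "card F = d - 1"
  shows "card {V \<in> zset ` tope_cocircuits C T. F \<subseteq> V} = 0
    \<or> card {V \<in> zset ` tope_cocircuits C T. F \<subseteq> V} = 2"
proof (cases "\<exists>X. vertex E X \<and> F \<subseteq> zset X")
  case True
  then obtain X where X: "vertex E X" "F \<subseteq> zset X"
    by blast
  obtain g where "g \<in> E" "g \<notin> zset X"
    using exists_notin_zset X(1) by (auto simp: vertex_def)
  then obtain Y where Y: "vertex E Y" "F \<subseteq> zset Y" "zset Y \<noteq> zset X"
    using exists_adjacent_vertex[OF order_refl X F(2)] by blast
  have "{V \<in> zset ` tope_cocircuits C T. F \<subseteq> V} = {zset X, zset Y}"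
  proof (intro equalityI subsetI)
    fix V assume "V \<in> {V \<in> zset ` tope_cocircuits C T. F \<subseteq> V}"
    then obtain W where W: "vertex E W" "F \<subseteq> zset W" "V = zset W"
      by (auto simp: tope_cocircuits_iff_vertex)
    then show "V \<in> {zset X, zset Y}"
      using at_most_two_vertices[OF order_refl X(1) Y(1) W(1) X(2) Y(2) W(2) F(2)] Y(3) by auto
  next
    fix V assume "V \<in> {zset X, zset Y}"
    then show "V \<in> {V \<in> zset ` tope_cocircuits C T. F \<subseteq> V}"
      using X Y tope_cocircuits_iff_vertex by blast
  qed
  then show ?thesis
    using Y(3) by simp
next
  case False
  then have "{V \<in> zset ` tope_cocircuits C T. F \<subseteq> V} = {}"
    by (auto simp: tope_cocircuits_iff_vertex)
  then show ?thesis
    by (metis card.empty)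
qed

lemma vertex_sets_connected:
  assumes X: "X \<in> tope_cocircuits C T" and Y: "Y \<in> tope_cocircuits C T"
  shows "\<exists>(Z :: nat \<Rightarrow> 'a set) k. Z 0 = zset X \<and> Z k = zset Y
    \<and> (\<forall>i\<le>k. Z i \<in> zset ` tope_cocircuits C T \<and> zset X \<inter> zset Y \<subseteq> Z i)
    \<and> (\<forall>i<k. abs_adj E (zset ` tope_cocircuits C T) d (Z i) (Z (Suc i)))"
proof -
  let ?S = "zset X \<inter> zset Y"
  have "(adj_vertex E ?S)\<^sup>*\<^sup>* X Y"
    using vertex_connected[OF order_refl d_less_card_E] X Y
    by (simp add: vertex_connected_def tope_cocircuits_iff_vertex)
  then obtain k where "(adj_vertex E ?S ^^ k) X Y"
    by (auto simp: rtranclp_power)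
  then obtain f where f: "f 0 = X" "f k = Y" "\<forall>i<k. adj_vertex E ?S (f i) (f (Suc i))"
    by (auto simp: relpowp_fun_conv)
  have f_vertex: "f i \<in> tope_cocircuits C T \<and> ?S \<subseteq> zset (f i)" if "i \<le> k" for i
  proof (cases "i = k")
    case True
    then show ?thesis
      using f(2) Y by auto
  next
    case False
    then show ?thesis
      using f(3) that by (auto simp: adj_vertex_def tope_cocircuits_iff_vertex)
  qed
  have "abs_adj E (zset ` tope_cocircuits C T) d (zset (f i)) (zset (f (Suc i)))" if "i < k" for i
  proof -
    have "adj_vertex E ?S (f i) (f (Suc i))"
      using f(3) that by blast
    moreover have "zset (f i) \<in> zset ` tope_cocircuits C T"
      "zset (f (Suc i)) \<in> zset ` tope_cocircuits C T"
      using f_vertex that by auto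
    moreover have "zset (f i) \<inter> zset (f (Suc i)) \<subseteq> E"
      using zero_part_subset[of E "f i"] by blast
    ultimately show ?thesis
      unfolding abs_adj_def adj_vertex_def by blast
  qed
  then show ?thesis
    using f f_vertex by (intro exI[of _ "\<lambda>i. zset (f i)"] exI[of _ k]) auto
qed

lemma abstract_polytope_vertex_sets: "abstract_polytope E (zset ` tope_cocircuits C T) d"
proof -
  have "zset ` tope_cocircuits C T \<subseteq> Pow E"
    using zero_part_subset[of E] by blast
  moreover have "\<forall>V\<in>zset ` tope_cocircuits C T. card V = d"
    using card_zset by (auto simp: tope_cocircuits_def)
  moreover have "\<exists>(Z :: nat \<Rightarrow> 'a set) k. Z 0 = V \<and> Z k = W
      \<and> (\<forall>i\<le>k. Z i \<in> zset ` tope_cocircuits C T \<and> V \<inter> W \<subseteq> Z i)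
      \<and> (\<forall>i<k. abs_adj E (zset ` tope_cocircuits C T) d (Z i) (Z (Suc i)))"
    if V: "V \<in> zset ` tope_cocircuits C T" and W: "W \<in> zset ` tope_cocircuits C T" for V W
  proof -
    obtain X Y where "X \<in> tope_cocircuits C T" "Y \<in> tope_cocircuits C T" "V = zset X" "W = zset Y"
      using V W by blast
    then show ?thesis
      using vertex_sets_connected by blast
  qed
  ultimately show ?thesis
    unfolding abstract_polytope_def
    using finite_E card_vertex_sets_containing by auto
qed

lemma vertices_sep_empty:
  assumes X: "vertex E X" and Y: "vertex E Y"
  shows "sep X Y = {}"
proof -
  have "x \<notin> sep X Y" for x
  proof
    assume "x \<in> sep X Y"
    then have Xx: "X x \<noteq> Zero" and Yx: "Y x = sneg (X x)"
      by (auto simp: sep_iff)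
    have XC: "X \<in> C"
      using X by (simp add: vertex_def)
    have x: "x \<in> E"
      using signvecs_nonzero_mem[OF cocircuit_signvec[OF XC] Xx] .
    have "X x = T x" "Y x = T x"
      using vertex_agrees[OF X order_refl x] vertex_agrees[OF Y order_refl x] Xx Yx
      by (simp_all add: mem_zero_part_iff)
    then show False
      using Xx Yx sneg_neq_self by metis
  qed
  then show ?thesis
    by blast
qed

lemma cocirc_adj_iff_abs_adj:
  assumes X: "X \<in> tope_cocircuits C T" and Y: "Y \<in> tope_cocircuits C T"
  shows "cocirc_adj E C X Y \<longleftrightarrow> abs_adj E (zset ` tope_cocircuits C T) d (zset X) (zset Y)"
proof -
  have vertices: "vertex E X" "vertex E Y"
    using X Y tope_cocircuits_iff_vertex by auto
  have "X = Y \<longleftrightarrow> zset X = zset Y"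
    using inj_on_zset_tope_cocircuits X Y by (auto simp: inj_on_def)
  moreover have "d - 1 \<le> card (zset X \<inter> zset Y) \<longleftrightarrow>
      (\<exists>F\<subseteq>zset X \<inter> zset Y. card F = d - 1)"
    by (rule le_card_iff_exists_subset) (simp add: finite_zset)
  then have "d - 1 \<le> card (zset X \<inter> zset Y) \<longleftrightarrow>
      (\<exists>F. F \<subseteq> E \<and> card F = d - 1 \<and> F \<subseteq> zset X \<and> F \<subseteq> zset Y)"
    using zero_part_subset[of E X] by auto
  moreover have "om_rank C - 2 = d - 1"
    by simp
  ultimately show ?thesis
    using X Y vertices vertices_sep_empty[OF vertices]
    by (auto simp: cocirc_adj_def abs_adj_def vertex_def)
qed

end

theorem lemma2p4:
  fixes E :: "'e set" and C :: "'e svec set" and T :: "'e svec"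
  assumes "oriented_matroid E C"
    and "uniform_om E C"
    and "om_rank C \<ge> 2"
    and "is_tope C T"
  shows "abstract_polytope E (zero_part E ` tope_cocircuits C T) (om_rank C - 1)
    \<and> bij_betw (zero_part E) (tope_cocircuits C T) (zero_part E ` tope_cocircuits C T)
    \<and> (\<forall>X\<in>tope_cocircuits C T. \<forall>Y\<in>tope_cocircuits C T.
          cocirc_adj E C X Y \<longleftrightarrow>
          abs_adj E (zero_part E ` tope_cocircuits C T) (om_rank C - 1)
                  (zero_part E X) (zero_part E Y))"
proof -
  interpret uom_tope E C T
    using assms by unfold_locales
  show ?thesis
    using abstract_polytope_vertex_sets inj_on_zset_tope_cocircuits cocirc_adj_iff_abs_adj
    by (simp add: bij_betw_def)
qed

end
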